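(* Let $\mathbf{Q}(t)=(Q_1(t),\ldots,Q_K(t))$, $t\in\{0,1,2,\ldots\}$, be a stochastic vector process with real-valued components and $p(t)$ a real-valued stochastic process on the same probability space; let $\mathcal{H}(0)=\{\mathbf{Q}(0)\}$ and $\mathcal{H}(t)=\{\mathbf{Q}(0),\ldots,\mathbf{Q}(t),p(0),\ldots,p(t-1)\}$ for $t>0$. Let $L(\mathbf{Q})=\frac{1}{2}\sum_{k=1}^Kw_kQ_k^2$ with constants $w_k>0$, $\|\mathbf{Q}\|=\sqrt{L(\mathbf{Q})}$, $\Delta(\mathcal{H}(t))=\mathbb{E}[L(\mathbf{Q}(t+1))-L(\mathbf{Q}(t))\mid\mathcal{H}(t)]$, and $d_k(t)=Q_k(t+1)-Q_k(t)$. Suppose there is a finite constant $D$ with $\mathbb{E}[d_k(t)^4\mid\mathbf{Q}(t)]\leq D$ for all $t$, all possible $\mathbf{Q}(t)$ and all $k$; that $\mathbb{E}[\|\mathbf{Q}(0)\|^4]<\infty$; and that there are constants $\epsilon>0$ and $\tilde{B}>0$ such that for all $t$ and all possible $\mathcal{H}(t)$, $$\Delta(\mathcal{H}(t))\leq\tilde{B}-\epsilon\sum_{k=1}^K|Q_k(t)|.$$ Then: (a) There are constants $c>0$ and $a>0$ such that whenever $\|\mathbf{Q}(t)\|\geq a$, $\mathbb{E}[\|\mathbf{Q}(t+1)\|\mid\mathbf{Q}(t)]\leq\|\mathbf{Q}(t)\|-c$. (b) There is a finite constant $b>0$ such that for all $M\in\{1,2,\ldots\}$, $\frac{1}{M}\sum_{t=0}^{M-1}\mathbb{E}[\|\mathbf{Q}(t)\|^3]\leq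 b$. (c) For all $k\in\{1,\ldots,K\}$, $\sum_{t=1}^\infty\mathbb{E}[Q_k(t)^2]/t^2<\infty$. (d) For all $k\in\{1,\ldots,K\}$, $\lim_{t\to\infty}Q_k(t)/t=0$ with probability 1. (e) $\limsup_{t\to\infty}\frac{1}{t}\sum_{\tau=0}^{t-1}\sum_{k=1}^K|Q_k(\tau)|\leq\tilde{B}/\epsilon$ with probability 1.
   Context: Time is slotted. "For all possible $\mathcal{H}(t)$" (resp. $\mathbf{Q}(t)$) means for every realization (almost surely). *)

theory Defs
  imports "HOL-Probability.Probability"
begin

definition lyap :: "(nat \<Rightarrow> real) \<Rightarrow> nat \<Rightarrow> (nat \<Rightarrow> real) \<Rightarrow> real" where
  "lyap w K q = (1/2) * (\<Sum>k=1..K. w k * (q k)^2)"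

definition lnorm :: "(nat \<Rightarrow> real) \<Rightarrow> nat \<Rightarrow> (nat \<Rightarrow> real) \<Rightarrow> real" where
  "lnorm w K q = sqrt (lyap w K q)"

definition gen_sigma :: "'a set \<Rightarrow> ('a \<Rightarrow> real) set \<Rightarrow> 'a measure" where
  "gen_sigma \<Omega> fs = sigma \<Omega> {f -` A \<inter> \<Omega> | f A. f \<in> fs \<and> A \<in> sets borel}"

text \<open>H(t) = {Q(0),...,Q(t), p(0),...,p(t-1)} (for t = 0 just {Q(0)}).  Q t k \<omega> = Q_k(t)(\<omega>).\<close>

definition hist_alg :: "'a measure \<Rightarrow> nat \<Rightarrow> (nat \<Rightarrow> nat \<Rightarrow> 'a \<Rightarrow> real) \<Rightarrow> (nat \<Rightarrow> 'a \<Rightarrow> real)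
    \<Rightarrow> nat \<Rightarrow> 'a measure" where
  "hist_alg M K Q p t = gen_sigma (space M)
     ({Q s k | s k. s \<le> t \<and> k \<in> {1..K}} \<union> {p s | s. s < t})"

definition state_alg :: "'a measure \<Rightarrow> nat \<Rightarrow> (nat \<Rightarrow> nat \<Rightarrow> 'a \<Rightarrow> real) \<Rightarrow> nat \<Rightarrow> 'a measure" where
  "state_alg M K Q t = gen_sigma (space M) {Q t k | k. k \<in> {1..K}}"

end

theory Submission
  imports Defs "HOL-Library.Discrete_Functions"
begin

text \<open>
  Multiplying the drift inequality by L(Q(t)) and taking expectations gives
  E[L(t+1)^2] <= E[L(t)^2] + C - (eps/c) E[||Q(t)||^3]: the second moment of the increment of L
  is bounded, via the fourth-moment hypothesis, by a multiple of E[L(t)], and this linear term is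
  absorbed by half of the cubic gain. Telescoping gives (b) and E[L(t)^2] = O(t), hence
  E[Q_k(t)^2] = O(sqrt t), which gives (c); (d) follows because a series of nonnegative
  random variables with finite expected sum converges almost surely. Part (a) is the conditional
  form of sqrt x <= x/(2n) + n/2 taken at n = ||Q(t)||.
  For (e), summing the drift inequality along a path bounds eps * sum_{tau<t} sum_k |Q_k(tau)| by
  B t + L(Q(0)) + Z(t), where Z is the martingale of the compensated increments of L. Since
  E[Z(t)^2] = O(t), Z(n^2)/n^2 -> 0 almost surely, and an average up to time t is controlled by
  the partial sums up to the squares bracketing t.
\<close>

lemma square_sum_le: "((a::real) + b)\<^sup>2 \<le> 2 * a\<^sup>2 + 2 * b\<^sup>2"
  using sum_squares_bound[of a b] by (simp add: power2_sum)

lemma abs_mult_le_sum_squares: "\<bar>(a::real) * b\<bar> \<le> a\<^sup>2 + b\<^sup>2"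
proof -
  have "2 * (\<bar>a\<bar> * \<bar>b\<bar>) \<le> a\<^sup>2 + b\<^sup>2"
    using sum_squares_bound[of "\<bar>a\<bar>" "\<bar>b\<bar>"] by simp
  moreover have "0 \<le> \<bar>a\<bar> * \<bar>b\<bar>" by simp
  ultimately show ?thesis unfolding abs_mult by linarith
qed

lemma le_square_div_plus: "(r::real) > 0 \<Longrightarrow> x \<le> x\<^sup>2 / (2 * r) + r / 2"
  using sum_squares_bound[of x r] by (simp add: field_simps power2_eq_square)

lemma sqrt_le_div_plus: "x \<ge> 0 \<Longrightarrow> s > 0 \<Longrightarrow> sqrt x \<le> x / (2 * s) + s / 2"
  using le_square_div_plus[of s "sqrt x"] by simp

lemma abs_le_one_plus_square: "\<bar>x::real\<bar> \<le> 1 + x\<^sup>2"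
  using le_square_div_plus[of 1 "\<bar>x\<bar>"] by simp

lemma cube_le_one_plus_fourth:
  assumes "(x::real) \<ge> 0" shows "x ^ 3 \<le> 1 + x ^ 4"
proof (cases "x \<le> 1")
  case True
  then have "x ^ 3 \<le> 1" using assms by (simp add: power_le_one)
  then show ?thesis by (simp add: add_increasing2)
next
  case False
  then have "x ^ 3 * 1 \<le> x ^ 3 * x" using assms by (intro mult_left_mono) auto
  then show ?thesis by (simp add: power_Suc2[symmetric] eval_nat_numeral)
qed

lemma square_le_cube:
  assumes "(x::real) \<ge> 0" "\<delta> > 0" shows "x\<^sup>2 \<le> \<delta> * x ^ 3 + 1 / \<delta>\<^sup>2"
proof (cases "\<delta> * x \<ge> 1")
  case True
  have "x\<^sup>2 * 1 \<le> x\<^sup>2 * (\<delta> * x)" by (rule mult_left_mono[OF True]) simp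
  then have "x\<^sup>2 \<le> \<delta> * x ^ 3" by (simp add: power3_eq_cube power2_eq_square ac_simps)
  then show ?thesis by (simp add: add_increasing2)
next
  case False
  then have "x\<^sup>2 \<le> (1 / \<delta>)\<^sup>2" using assms by (intro power_mono) (auto simp: field_simps)
  then show ?thesis using assms by (simp add: power_divide add_increasing)
qed

lemma gen_sigma_space: "space (gen_sigma \<Omega> fs) = \<Omega>"
  unfolding gen_sigma_def by (rule space_measure_of) auto

lemma sets_gen_sigma:
  "sets (gen_sigma \<Omega> fs) = sigma_sets \<Omega> {f -` A \<inter> \<Omega> | f A. f \<in> fs \<and> A \<in> sets borel}"
  unfolding gen_sigma_def by (rule sets_measure_of) auto

lemma measurable_gen_sigma: "f \<in> fs \<Longrightarrow> f \<in> borel_measurable (gen_sigma \<Omega> fs)"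
  unfolding measurable_def gen_sigma_space sets_gen_sigma by auto

lemma subalgebra_gen_sigma:
  assumes "\<And>f. f \<in> fs \<Longrightarrow> f \<in> borel_measurable M"
  shows "subalgebra M (gen_sigma (space M) fs)"
  unfolding subalgebra_def gen_sigma_space sets_gen_sigma
  by (intro conjI refl sets.sigma_sets_subset) (use assms in \<open>auto simp: measurable_sets\<close>)

lemma gen_sigma_subalgebra_mono:
  assumes "fs \<subseteq> gs"
  shows "subalgebra (gen_sigma \<Omega> gs) (gen_sigma \<Omega> fs)"
  unfolding subalgebra_def gen_sigma_space sets_gen_sigma
  by (intro conjI refl sigma_sets_mono') (use assms in auto)

lemma integrable_dominated:
  fixes f :: "'a \<Rightarrow> real"
  assumes "integrable M g" "f \<in> borel_measurable M" "\<And>x. \<bar>f x\<bar> \<le> g x"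
  shows "integrable M f"
  by (rule Bochner_Integration.integrable_bound[OF assms(1,2)])
    (use assms(3) in \<open>auto intro: order_trans abs_ge_self\<close>)

lemma AE_LIMSEQ_zero_if_summable_second_moments:
  fixes f :: "nat \<Rightarrow> 'a \<Rightarrow> real"
  assumes [measurable]: "\<And>n. f n \<in> borel_measurable M"
    and summable: "(\<Sum>n. \<integral>\<^sup>+ x. ennreal ((f n x)\<^sup>2) \<partial>M) < \<infinity>"
  shows "AE x in M. (\<lambda>n. f n x) \<longlonglongrightarrow> 0"
proof -
  have "(\<integral>\<^sup>+ x. (\<Sum>n. ennreal ((f n x)\<^sup>2)) \<partial>M) = (\<Sum>n. \<integral>\<^sup>+ x. ennreal ((f n x)\<^sup>2) \<partial>M)"
    by (rule nn_integral_suminf) measurable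
  then have "AE x in M. (\<Sum>n. ennreal ((f n x)\<^sup>2)) \<noteq> \<infinity>"
    using summable by (intro nn_integral_PInf_AE) auto
  then show ?thesis
  proof eventually_elim
    case (elim x)
    then have "summable (\<lambda>n. (f n x)\<^sup>2)" by (intro summable_suminf_not_top) auto
    then have "(\<lambda>n. sqrt ((f n x)\<^sup>2)) \<longlonglongrightarrow> sqrt 0"
      by (intro tendsto_real_sqrt summable_LIMSEQ_zero)
    then show ?case by (simp add: tendsto_rabs_zero_iff)
  qed
qed

lemma filterlim_floor_sqrt_at_top: "filterlim floor_sqrt at_top sequentially"
  unfolding filterlim_at_top eventually_sequentially
  by (intro allI exI[of _ "_\<^sup>2"]) (auto intro: le_floor_sqrtI)

lemma limsup_average_le_if_square_subsequence:
  fixes s Z :: "nat \<Rightarrow> real" and A C :: real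
  assumes s_nonneg: "\<And>\<tau>. s \<tau> \<ge> 0"
    and partial_sums: "\<And>n. (\<Sum>\<tau><n. s \<tau>) \<le> A * real n + C + Z n"
    and Z_squares: "(\<lambda>n. Z (n\<^sup>2) / real (n\<^sup>2)) \<longlonglongrightarrow> 0"
  shows "limsup (\<lambda>t. ereal ((1 / real t) * (\<Sum>\<tau><t. s \<tau>))) \<le> ereal A"
proof -
  \<comment> \<open>\<open>R n\<close> bounds the average up to any \<open>t \<in> [n\<^sup>2, (n+1)\<^sup>2)\<close>\<close>
  define R where "R n = (real (Suc n) / real n)\<^sup>2 *
      (A + C / real ((Suc n)\<^sup>2) + Z ((Suc n)\<^sup>2) / real ((Suc n)\<^sup>2))" for n
  have "strict_mono (\<lambda>n. (Suc n)\<^sup>2)"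
    by (auto simp: strict_mono_def power_strict_mono)
  then have "(\<lambda>n. C / real ((Suc n)\<^sup>2)) \<longlonglongrightarrow> 0"
    using LIMSEQ_subseq_LIMSEQ[OF lim_const_over_n, of "\<lambda>n. (Suc n)\<^sup>2" C]
    by (simp only: comp_def)
  then have "R \<longlonglongrightarrow> 1\<^sup>2 * (A + 0 + 0)"
    unfolding R_def using LIMSEQ_Suc[OF Z_squares]
    by (intro tendsto_intros LIMSEQ_Suc_n_over_n)
  then have "(\<lambda>t. R (floor_sqrt t)) \<longlonglongrightarrow> A"
    by (auto intro: filterlim_compose[OF _ filterlim_floor_sqrt_at_top])
  have "(1 / real t) * (\<Sum>\<tau><t. s \<tau>) \<le> R (floor_sqrt t)" if "t \<ge> 1" for t
  proof -
    define n where "n = floor_sqrt t"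
    have n: "n\<^sup>2 \<le> t" "t < (Suc n)\<^sup>2" "n \<ge> 1"
      using that Suc_floor_sqrt_power2_gt[of t] by (auto simp: n_def le_floor_sqrtI)
    then have n_real: "real n > 0" "real n ^ 2 \<le> real t"
      by (auto simp flip: of_nat_power)
    have "(1 / real t) * (\<Sum>\<tau><t. s \<tau>) \<le> (1 / real n ^ 2) * (\<Sum>\<tau><t. s \<tau>)"
      using n_real by (intro mult_right_mono sum_nonneg s_nonneg) (auto simp: frac_le)
    also have "\<dots> \<le> (1 / real n ^ 2) * (\<Sum>\<tau><(Suc n)\<^sup>2. s \<tau>)"
      using n by (intro mult_left_mono sum_mono2 s_nonneg) auto
    also have "\<dots> \<le> (1 / real n ^ 2) * (A * real ((Suc n)\<^sup>2) + C + Z ((Suc n)\<^sup>2))"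
      by (intro mult_left_mono partial_sums) simp
    also have "\<dots> = R n"
    proof -
      have "(1 / m) * (A * q + C + z) = (q / m) * (A + C / q + z / q)" if "q > 0" for q m z :: real
        using that by (cases "m = 0") (simp_all add: field_simps)
      then show ?thesis
        unfolding R_def power_divide by (metis of_nat_power zero_less_power of_nat_0_less_iff zero_less_Suc)
    qed
    finally show ?thesis by (simp add: n_def)
  qed
  then have "\<forall>\<^sub>F t in sequentially. ereal ((1 / real t) * (\<Sum>\<tau><t. s \<tau>)) \<le> ereal (R (floor_sqrt t))"
    unfolding eventually_sequentially by auto
  then have "limsup (\<lambda>t. ereal ((1 / real t) * (\<Sum>\<tau><t. s \<tau>))) \<le> limsup (\<lambda>t. ereal (R (floor_sqrt t)))"
    by (rule Limsup_mono)
  also have "\<dots> = ereal A"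
    using \<open>(\<lambda>t. R (floor_sqrt t)) \<longlonglongrightarrow> A\<close> by (intro lim_imp_Limsup) auto
  finally show ?thesis .
qed

section \<open>The quadratic Lyapunov function\<close>

context
  fixes w :: "nat \<Rightarrow> real" and K :: nat
  assumes w_pos: "\<And>k. k \<in> {1..K} \<Longrightarrow> w k > 0"
begin

lemma w_nonneg: "k \<in> {1..K} \<Longrightarrow> w k \<ge> 0"
  using w_pos by (simp add: less_imp_le)

lemma lyap_nonneg: "lyap w K q \<ge> 0"
  unfolding lyap_def by (intro mult_nonneg_nonneg sum_nonneg) (auto intro: w_nonneg)

lemma lnorm_nonneg: "lnorm w K q \<ge> 0"
  unfolding lnorm_def by (simp add: lyap_nonneg)

lemma lnorm_power2: "(lnorm w K q)\<^sup>2 = lyap w K q"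
  unfolding lnorm_def by (simp add: lyap_nonneg)

lemma power2_le_lyap:
  assumes k: "k \<in> {1..K}"
  shows "(q k)\<^sup>2 \<le> (\<Sum>j=1..K. 2 / w j) * lyap w K q"
proof -
  have "w k * (q k)\<^sup>2 \<le> (\<Sum>j=1..K. w j * (q j)\<^sup>2)"
    by (rule member_le_sum) (use k in \<open>auto simp: w_nonneg\<close>)
  then have "(q k)\<^sup>2 \<le> (2 / w k) * lyap w K q"
    using w_pos[OF k] by (simp add: lyap_def field_simps)
  also have "\<dots> \<le> (\<Sum>j=1..K. 2 / w j) * lyap w K q"
    by (intro mult_right_mono member_le_sum lyap_nonneg) (use k in \<open>auto intro: w_nonneg\<close>)
  finally show ?thesis .
qed

lemma sum_abs_power2_le_lyap:
  "(\<Sum>k=1..K. \<bar>q k\<bar>)\<^sup>2 \<le> real K * real K * (\<Sum>j=1..K. 2 / w j) * lyap w K q"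
proof -
  have "(\<Sum>k=1..K. \<bar>q k\<bar>)\<^sup>2 \<le> (\<Sum>k=1..K. (q k)\<^sup>2) * real K"
    using sum_squared_le_sum_of_squares[of "\<lambda>k. \<bar>q k\<bar>" "{1..K}"] by simp
  also have "\<dots> \<le> (\<Sum>k=1..K. (\<Sum>j=1..K. 2 / w j) * lyap w K q) * real K"
    by (intro mult_right_mono sum_mono power2_le_lyap) auto
  finally show ?thesis by (simp add: ac_simps)
qed

lemma lnorm_le_sum_abs:
  "lnorm w K q \<le> (sqrt ((\<Sum>k=1..K. w k) / 2) + 1) * (\<Sum>k=1..K. \<bar>q k\<bar>)"
proof -
  define s where "s = (\<Sum>k=1..K. \<bar>q k\<bar>)"
  have s_nonneg: "s \<ge> 0" by (simp add: s_def sum_nonneg)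
  have "lyap w K q \<le> (1/2) * (\<Sum>k=1..K. w k * s\<^sup>2)"
    unfolding lyap_def
  proof (rule mult_left_mono[OF sum_mono])
    fix k assume k: "k \<in> {1..K}"
    have "\<bar>q k\<bar> \<le> s" unfolding s_def by (rule member_le_sum) (use k in auto)
    then have "(q k)\<^sup>2 \<le> s\<^sup>2" by (metis abs_ge_zero power2_abs power_mono)
    then show "w k * (q k)\<^sup>2 \<le> w k * s\<^sup>2" using w_pos[OF k] by simp
  qed simp
  then have "lnorm w K q \<le> sqrt (((\<Sum>k=1..K. w k) / 2) * s\<^sup>2)"
    unfolding lnorm_def by (simp add: sum_distrib_right)
  also have "\<dots> = sqrt ((\<Sum>k=1..K. w k) / 2) * s"
    using s_nonneg by (simp only: real_sqrt_mult real_sqrt_abs abs_of_nonneg)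
  also have "\<dots> \<le> (sqrt ((\<Sum>k=1..K. w k) / 2) + 1) * s"
    using s_nonneg by (simp add: distrib_right)
  finally show ?thesis unfolding s_def .
qed

lemma lyap_add_le:
  "lyap w K (\<lambda>k. q k + r k) \<le> 2 * lyap w K q + (\<Sum>k=1..K. w k * (r k)\<^sup>2)"
proof -
  have "lyap w K (\<lambda>k. q k + r k) \<le> (1/2) * (\<Sum>k=1..K. w k * (2 * (q k)\<^sup>2 + 2 * (r k)\<^sup>2))"
    unfolding lyap_def
    by (intro mult_left_mono sum_mono) (auto intro: square_sum_le intro: w_nonneg)
  also have "\<dots> = 2 * lyap w K q + (\<Sum>k=1..K. w k * (r k)\<^sup>2)"
    unfolding lyap_def by (simp add: sum.distrib sum_distrib_left algebra_simps)
  finally show ?thesis .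
qed

end

lemma lyap_diff:
  "lyap w K r - lyap w K q = (\<Sum>k=1..K. w k * (q k * (r k - q k) + (r k - q k)\<^sup>2 / 2))"
  unfolding lyap_def sum_subtractf[symmetric] sum_distrib_left
  by (intro sum.cong) (auto simp: power2_eq_square field_simps)

section \<open>Moment bounds under the drift condition\<close>

locale drift_system = prob_space M for M :: "'a measure" +
  fixes K :: nat
    and Q :: "nat \<Rightarrow> nat \<Rightarrow> 'a \<Rightarrow> real"
    and p :: "nat \<Rightarrow> 'a \<Rightarrow> real"
    and w :: "nat \<Rightarrow> real"
    and D \<epsilon> B :: real
  assumes Q_meas: "\<And>t k. k \<in> {1..K} \<Longrightarrow> Q t k \<in> borel_measurable M"
    and p_meas: "\<And>t. p t \<in> borel_measurable M"
    and w_pos: "\<And>k. k \<in> {1..K} \<Longrightarrow> w k > 0"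
    and fourth_moment: "\<And>t k. k \<in> {1..K} \<Longrightarrow>
          AE \<omega> in M. nn_cond_exp M (state_alg M K Q t)
              (\<lambda>\<omega>. ennreal ((Q (Suc t) k \<omega> - Q t k \<omega>) ^ 4)) \<omega> \<le> ennreal D"
    and init: "(\<integral>\<^sup>+ \<omega>. ennreal (lnorm w K (\<lambda>k. Q 0 k \<omega>) ^ 4) \<partial>M) < \<infinity>"
    and eps_pos: "\<epsilon> > 0" and B_pos: "B > 0"
    and drift: "\<And>t. AE \<omega> in M.
          real_cond_exp M (hist_alg M K Q p t)
              (\<lambda>\<omega>. lyap w K (\<lambda>k. Q (Suc t) k \<omega>) - lyap w K (\<lambda>k. Q t k \<omega>)) \<omega>
            \<le> B - \<epsilon> * (\<Sum>k=1..K. \<bar>Q t k \<omega>\<bar>)"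
begin

abbreviation "F t \<equiv> state_alg M K Q t"
abbreviation "H t \<equiv> hist_alg M K Q p t"
abbreviation "L t \<omega> \<equiv> lyap w K (\<lambda>k. Q t k \<omega>)"
abbreviation "N t \<omega> \<equiv> lnorm w K (\<lambda>k. Q t k \<omega>)"
abbreviation "S t \<omega> \<equiv> \<Sum>k=1..K. \<bar>Q t k \<omega>\<bar>"
abbreviation "d t k \<omega> \<equiv> Q (Suc t) k \<omega> - Q t k \<omega>"

lemma subalgebra_state_alg: "subalgebra M (F t)"
  unfolding state_alg_def by (rule subalgebra_gen_sigma) (auto intro: Q_meas)

lemma subalgebra_hist_alg: "subalgebra M (H t)"
  unfolding hist_alg_def by (rule subalgebra_gen_sigma) (auto intro: Q_meas p_meas)

lemma state_alg_subalgebra_hist_alg: "subalgebra (H t) (F t)"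
  unfolding hist_alg_def state_alg_def by (rule gen_sigma_subalgebra_mono) auto

lemma hist_alg_mono: "s \<le> t \<Longrightarrow> subalgebra (H t) (H s)"
  unfolding hist_alg_def by (rule gen_sigma_subalgebra_mono) (auto, metis le_trans)

lemma sigma_finite_state_alg: "sigma_finite_subalgebra M (F t)"
  by (rule finite_measure_subalgebra_is_sigma_finite, unfold_locales, rule subalgebra_state_alg)

lemma sigma_finite_hist_alg: "sigma_finite_subalgebra M (H t)"
  by (rule finite_measure_subalgebra_is_sigma_finite, unfold_locales, rule subalgebra_hist_alg)

lemma Q_measurable_state_alg: "k \<in> {1..K} \<Longrightarrow> Q t k \<in> borel_measurable (F t)"
  unfolding state_alg_def by (rule measurable_gen_sigma) auto

lemma Q_measurable_hist_alg: "k \<in> {1..K} \<Longrightarrow> s \<le> t \<Longrightarrow> Q s k \<in> borel_measurable (H t)"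
  unfolding hist_alg_def by (rule measurable_gen_sigma) auto

lemma L_N_S_measurable:
  assumes "\<And>k. k \<in> {1..K} \<Longrightarrow> Q t k \<in> borel_measurable G"
  shows "L t \<in> borel_measurable G" "N t \<in> borel_measurable G" "S t \<in> borel_measurable G"
  using assms unfolding lnorm_def lyap_def by (auto intro!: borel_measurable_sum)

lemma L_N_S_borel_measurable [measurable]:
  "L t \<in> borel_measurable M" "N t \<in> borel_measurable M" "S t \<in> borel_measurable M"
  using L_N_S_measurable[OF Q_meas] by auto

lemma L_N_S_measurable_state_alg:
  "L t \<in> borel_measurable (F t)" "N t \<in> borel_measurable (F t)" "S t \<in> borel_measurable (F t)"
  using L_N_S_measurable[OF Q_measurable_state_alg] by auto

lemma L_measurable_hist_alg: "s \<le> t \<Longrightarrow> L s \<in> borel_measurable (H t)"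
  using L_N_S_measurable[OF Q_measurable_hist_alg] by auto

lemma d_measurable [measurable]: "k \<in> {1..K} \<Longrightarrow> d t k \<in> borel_measurable M"
  using Q_meas by measurable

lemma L_nonneg: "L t \<omega> \<ge> 0"
  by (rule lyap_nonneg) (rule w_pos)

lemma N_nonneg: "N t \<omega> \<ge> 0"
  by (rule lnorm_nonneg) (rule w_pos)

lemma N_power2: "(N t \<omega>)\<^sup>2 = L t \<omega>"
  by (rule lnorm_power2) (rule w_pos)

lemma N_power4: "N t \<omega> ^ 4 = (L t \<omega>)\<^sup>2"
  using N_power2[of t \<omega>] by (metis numeral_Bit0 power_add power2_eq_square)

lemma S_nonneg: "S t \<omega> \<ge> 0"
  by (simp add: sum_nonneg)

definition "cQ = (\<Sum>k=1..K. 2 / w k)"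
definition "cN = sqrt ((\<Sum>k=1..K. w k) / 2) + 1" \<comment> \<open>the \<open>+ 1\<close> keeps it positive when \<open>K = 0\<close>\<close>

lemma cQ_nonneg: "cQ \<ge> 0"
  unfolding cQ_def by (intro sum_nonneg) (simp add: less_imp_le w_pos)

lemma cN_pos: "cN > 0"
  unfolding cN_def by (intro add_nonneg_pos real_sqrt_ge_zero divide_nonneg_pos sum_nonneg)
    (auto simp: less_imp_le w_pos)

lemma Q_power2_le: "k \<in> {1..K} \<Longrightarrow> (Q t k \<omega>)\<^sup>2 \<le> cQ * L t \<omega>"
  unfolding cQ_def by (rule power2_le_lyap) (auto intro: w_pos)

lemma S_power2_le: "(S t \<omega>)\<^sup>2 \<le> real K * real K * cQ * L t \<omega>"
  unfolding cQ_def by (rule sum_abs_power2_le_lyap) (rule w_pos)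

lemma N_le_S: "N t \<omega> \<le> cN * S t \<omega>"
  unfolding cN_def by (rule lnorm_le_sum_abs) (rule w_pos)

lemmas integrable_intros = Bochner_Integration.integrable_add integrable_mult_right
  integrable_mult_left Bochner_Integration.integrable_diff Bochner_Integration.integrable_sum
  integrable_const

definition "D' = 1 + max D 0" \<comment> \<open>bounds both \<open>E[d\<^sup>4|F]\<close> and \<open>E[d\<^sup>2|F] \<le> 1 + E[d\<^sup>4|F]\<close>\<close>

lemma D'_pos: "D' > 0"
  unfolding D'_def by simp

lemma nn_integral_d4_le:
  assumes k: "k \<in> {1..K}"
  shows "(\<integral>\<^sup>+ \<omega>. ennreal (d t k \<omega> ^ 4) \<partial>M) \<le> ennreal D'"
proof -
  interpret sigma_finite_subalgebra M "F t" by (rule sigma_finite_state_alg)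
  have "(\<integral>\<^sup>+ \<omega>. ennreal (d t k \<omega> ^ 4) \<partial>M)
      = (\<integral>\<^sup>+ \<omega>. 1 * nn_cond_exp M (F t) (\<lambda>\<omega>. ennreal (d t k \<omega> ^ 4)) \<omega> \<partial>M)"
    using nn_cond_exp_intg[of "\<lambda>_. 1" "\<lambda>\<omega>. ennreal (d t k \<omega> ^ 4)"] k by simp
  also have "\<dots> \<le> (\<integral>\<^sup>+ \<omega>. ennreal D \<partial>M)"
    by (rule nn_integral_mono_AE) (use fourth_moment[OF k, of t] in auto)
  also have "\<dots> \<le> ennreal D'"
    by (simp add: emeasure_space_1 D'_def ennreal_leI)
  finally show ?thesis .
qed

lemma integrable_d4: "k \<in> {1..K} \<Longrightarrow> integrable M (\<lambda>\<omega>. d t k \<omega> ^ 4)"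
  using nn_integral_d4_le[of k t]
  by (subst integrable_iff_bounded) (auto simp: zero_le_even_power intro: order_le_less_trans)

lemma integral_d4_le:
  assumes "k \<in> {1..K}" shows "(\<integral>\<omega>. d t k \<omega> ^ 4 \<partial>M) \<le> D'"
  using nn_integral_d4_le[OF assms] integrable_d4[OF assms] D'_pos
  by (subst (asm) nn_integral_eq_integral) (auto simp: zero_le_even_power)

lemma nn_cond_exp_d2_le:
  assumes k: "k \<in> {1..K}"
  shows "AE \<omega> in M. nn_cond_exp M (F t) (\<lambda>\<omega>. ennreal ((d t k \<omega>)\<^sup>2)) \<omega> \<le> ennreal D'"
proof -
  interpret sigma_finite_subalgebra M "F t" by (rule sigma_finite_state_alg)
  have d2_le: "ennreal ((d t k \<omega>)\<^sup>2) \<le> 1 + ennreal (d t k \<omega> ^ 4)" for \<omega>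
  proof -
    have "(d t k \<omega>)\<^sup>2 \<le> 1 + d t k \<omega> ^ 4"
      using abs_le_one_plus_square[of "(d t k \<omega>)\<^sup>2"] by (simp flip: power_mult)
    then show ?thesis
      by (metis ennreal_1 ennreal_leI ennreal_plus zero_le_even_power zero_less_one_class.zero_le_one
          even_numeral)
  qed
  have D_le: "1 + ennreal D \<le> ennreal D'"
    unfolding D'_def by (subst ennreal_plus) (auto intro: ennreal_leI)
  have "AE \<omega> in M. nn_cond_exp M (F t) (\<lambda>\<omega>. ennreal ((d t k \<omega>)\<^sup>2)) \<omega>
      \<le> nn_cond_exp M (F t) (\<lambda>\<omega>. 1 + ennreal (d t k \<omega> ^ 4)) \<omega>"
    by (rule nn_cond_exp_mono) (use k d2_le in auto)
  moreover have "AE \<omega> in M. nn_cond_exp M (F t) (\<lambda>\<omega>. 1) \<omega>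
      + nn_cond_exp M (F t) (\<lambda>\<omega>. ennreal (d t k \<omega> ^ 4)) \<omega>
      = nn_cond_exp M (F t) (\<lambda>\<omega>. 1 + ennreal (d t k \<omega> ^ 4)) \<omega>"
    by (rule nn_cond_exp_sum) (use k in auto)
  moreover have "AE \<omega> in M. 1 = nn_cond_exp M (F t) (\<lambda>\<omega>. 1) \<omega>"
    by (rule nn_cond_exp_F_meas) simp
  moreover note fourth_moment[OF k, of t]
  ultimately show ?thesis
  proof eventually_elim
    case (elim \<omega>)
    then have "nn_cond_exp M (F t) (\<lambda>\<omega>. ennreal ((d t k \<omega>)\<^sup>2)) \<omega>
        \<le> 1 + nn_cond_exp M (F t) (\<lambda>\<omega>. ennreal (d t k \<omega> ^ 4)) \<omega>"
      by simp
    also have "\<dots> \<le> 1 + ennreal D" using elim(4) by (rule add_left_mono)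
    finally show ?case using D_le by simp
  qed
qed

lemma integrable_L2: "integrable M (\<lambda>\<omega>. (L t \<omega>)\<^sup>2)"
proof (induction t)
  case 0
  show ?case
    using init by (subst integrable_iff_bounded) (simp add: N_power4 flip: N_power4)
next
  case (Suc t)
  define E where "E \<omega> = (\<Sum>k=1..K. w k * (d t k \<omega>)\<^sup>2)" for \<omega>
  have bound: "\<bar>(L (Suc t) \<omega>)\<^sup>2\<bar> \<le> 8 * (L t \<omega>)\<^sup>2 + 2 * real K * (\<Sum>k=1..K. (w k)\<^sup>2 * d t k \<omega> ^ 4)"
    for \<omega>
  proof -
    have "L (Suc t) \<omega> \<le> 2 * L t \<omega> + E \<omega>"
      using lyap_add_le[of K w "\<lambda>k. Q t k \<omega>" "\<lambda>k. d t k \<omega>"] w_pos by (simp add: E_def)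
    then have "(L (Suc t) \<omega>)\<^sup>2 \<le> (2 * L t \<omega> + E \<omega>)\<^sup>2"
      using L_nonneg[of "Suc t" \<omega>] by (intro power_mono) auto
    also have "\<dots> \<le> 2 * (2 * L t \<omega>)\<^sup>2 + 2 * (E \<omega>)\<^sup>2" by (rule square_sum_le)
    also have "(E \<omega>)\<^sup>2 \<le> (\<Sum>k=1..K. (w k * (d t k \<omega>)\<^sup>2)\<^sup>2) * card {1..K}"
      unfolding E_def by (rule sum_squared_le_sum_of_squares)
    also have "\<dots> = real K * (\<Sum>k=1..K. (w k)\<^sup>2 * d t k \<omega> ^ 4)"
      by (simp add: power_mult_distrib mult.commute flip: power_mult)
    finally show ?thesis by (simp add: power_mult_distrib)
  qed
  show ?case
    by (rule integrable_dominated[OF _ _ bound]) (intro integrable_intros Suc integrable_d4, auto)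
qed

lemma integrable_L: "integrable M (L t)"
  by (rule integrable_dominated[OF _ _ abs_le_one_plus_square]) (auto intro!: integrable_L2)

lemma integrable_N3: "integrable M (\<lambda>\<omega>. N t \<omega> ^ 3)"
proof (rule integrable_dominated[of _ "\<lambda>\<omega>. 1 + (L t \<omega>)\<^sup>2"])
  fix \<omega> show "\<bar>N t \<omega> ^ 3\<bar> \<le> 1 + (L t \<omega>)\<^sup>2"
    using cube_le_one_plus_fourth[OF N_nonneg[of t \<omega>]] N_nonneg[of t \<omega>] by (simp add: N_power4)
qed (auto intro!: integrable_L2)

lemma integrable_N: "integrable M (N t)"
  by (rule integrable_dominated[of _ "\<lambda>\<omega>. 1 + L t \<omega>"])
    (auto intro!: integrable_L
      simp: abs_le_one_plus_square[of "N t _", unfolded N_power2])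

lemma integrable_Q2:
  assumes "k \<in> {1..K}" shows "integrable M (\<lambda>\<omega>. (Q t k \<omega>)\<^sup>2)"
  by (rule integrable_dominated[of _ "\<lambda>\<omega>. cQ * L t \<omega>"])
    (use assms Q_meas in \<open>auto intro: integrable_L Q_power2_le\<close>)

lemma integrable_Q4:
  assumes k: "k \<in> {1..K}" shows "integrable M (\<lambda>\<omega>. (Q t k \<omega>) ^ 4)"
proof (rule integrable_dominated[of _ "\<lambda>\<omega>. cQ\<^sup>2 * (L t \<omega>)\<^sup>2"])
  fix \<omega>
  have "(Q t k \<omega>) ^ 4 = ((Q t k \<omega>)\<^sup>2)\<^sup>2" by simp
  also have "\<dots> \<le> (cQ * L t \<omega>)\<^sup>2" by (rule power_mono[OF Q_power2_le[OF k]]) simp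
  finally show "\<bar>(Q t k \<omega>) ^ 4\<bar> \<le> cQ\<^sup>2 * (L t \<omega>)\<^sup>2" by (simp add: power_mult_distrib)
qed (use k Q_meas in \<open>auto intro: integrable_L2\<close>)

lemma integrable_S2: "integrable M (\<lambda>\<omega>. (S t \<omega>)\<^sup>2)"
proof (rule integrable_dominated[of _ "\<lambda>\<omega>. real K * real K * cQ * L t \<omega>"])
  show "integrable M (\<lambda>\<omega>. real K * real K * cQ * L t \<omega>)"
    by (intro integrable_mult_right integrable_L)
  show "(\<lambda>\<omega>. (S t \<omega>)\<^sup>2) \<in> borel_measurable M" by measurable
  show "\<bar>(S t \<omega>)\<^sup>2\<bar> \<le> real K * real K * cQ * L t \<omega>" for \<omega>
    using S_power2_le[of t \<omega>] by simp
qed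

lemma integrable_S: "integrable M (S t)"
proof (rule integrable_dominated[OF _ _ abs_le_one_plus_square])
  show "integrable M (\<lambda>\<omega>. 1 + (S t \<omega>)\<^sup>2)"
    by (intro integrable_intros integrable_S2)
qed measurable

lemma integrable_L_S: "integrable M (\<lambda>\<omega>. L t \<omega> * S t \<omega>)"
proof (rule integrable_dominated[OF _ _ abs_mult_le_sum_squares])
  show "integrable M (\<lambda>\<omega>. (L t \<omega>)\<^sup>2 + (S t \<omega>)\<^sup>2)"
    by (intro integrable_intros integrable_L2 integrable_S2)
qed measurable

lemma integrable_dL: "integrable M (\<lambda>\<omega>. L (Suc t) \<omega> - L t \<omega>)"
  by (auto intro!: integrable_L)

lemma integrable_dL2: "integrable M (\<lambda>\<omega>. (L (Suc t) \<omega> - L t \<omega>)\<^sup>2)"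
  by (rule integrable_dominated[of _ "\<lambda>\<omega>. 2 * (L (Suc t) \<omega>)\<^sup>2 + 2 * (L t \<omega>)\<^sup>2"])
    (auto intro!: integrable_L2
      intro: square_sum_le[of "L (Suc t) _" "- L t _", simplified])

lemma integrable_L_dL: "integrable M (\<lambda>\<omega>. L t \<omega> * (L (Suc t) \<omega> - L t \<omega>))"
  by (rule integrable_dominated[OF _ _ abs_mult_le_sum_squares]) (auto intro: integrable_L2 integrable_dL2)

lemma integrable_Q2_d2:
  assumes k: "k \<in> {1..K}" shows "integrable M (\<lambda>\<omega>. (Q t k \<omega>)\<^sup>2 * (d t k \<omega>)\<^sup>2)"
  by (rule integrable_dominated[of _ "\<lambda>\<omega>. (Q t k \<omega>) ^ 4 + (d t k \<omega>) ^ 4"])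
    (use k Q_meas abs_mult_le_sum_squares[of "(Q t k _)\<^sup>2" "(d t k _)\<^sup>2"] in
      \<open>auto intro!: integrable_Q4 integrable_d4 simp flip: power_mult\<close>)

lemma cond_exp_L_state_alg_le:
  "AE \<omega> in M. real_cond_exp M (F t) (L (Suc t)) \<omega> \<le> L t \<omega> + B - \<epsilon> * S t \<omega>"
proof -
  interpret Ft: sigma_finite_subalgebra M "F t" by (rule sigma_finite_state_alg)
  interpret Ht: sigma_finite_subalgebra M "H t" by (rule sigma_finite_hist_alg)
  have int_bound: "integrable M (\<lambda>\<omega>. B - \<epsilon> * S t \<omega>)"
    by (intro integrable_intros integrable_S)
  have "AE \<omega> in M. real_cond_exp M (F t) (real_cond_exp M (H t) (\<lambda>\<omega>. L (Suc t) \<omega> - L t \<omega>)) \<omega>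
      = real_cond_exp M (F t) (\<lambda>\<omega>. L (Suc t) \<omega> - L t \<omega>) \<omega>"
    by (rule Ft.real_cond_exp_nested_subalg[OF subalgebra_hist_alg state_alg_subalgebra_hist_alg integrable_dL])
  moreover have "AE \<omega> in M. real_cond_exp M (F t) (real_cond_exp M (H t) (\<lambda>\<omega>. L (Suc t) \<omega> - L t \<omega>)) \<omega>
      \<le> real_cond_exp M (F t) (\<lambda>\<omega>. B - \<epsilon> * S t \<omega>) \<omega>"
    by (rule Ft.real_cond_exp_mono[OF drift Ht.real_cond_exp_int(1)[OF integrable_dL] int_bound])
  moreover have "AE \<omega> in M. real_cond_exp M (F t) (\<lambda>\<omega>. B - \<epsilon> * S t \<omega>) \<omega> = B - \<epsilon> * S t \<omega>"
    by (rule Ft.real_cond_exp_F_meas[OF int_bound])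
      (intro borel_measurable_diff borel_measurable_times borel_measurable_const
        L_N_S_measurable_state_alg)
  moreover have "AE \<omega> in M. real_cond_exp M (F t) (\<lambda>\<omega>. L (Suc t) \<omega> - L t \<omega>) \<omega>
     = real_cond_exp M (F t) (L (Suc t)) \<omega> - real_cond_exp M (F t) (L t) \<omega>"
    by (rule Ft.real_cond_exp_diff[OF integrable_L integrable_L])
  moreover have "AE \<omega> in M. real_cond_exp M (F t) (L t) \<omega> = L t \<omega>"
    by (rule Ft.real_cond_exp_F_meas[OF integrable_L L_N_S_measurable_state_alg(1)])
  ultimately show ?thesis by eventually_elim auto
qed

lemma integral_L_dL_le:
  "(\<integral>\<omega>. L t \<omega> * (L (Suc t) \<omega> - L t \<omega>) \<partial>M)
    \<le> B * (\<integral>\<omega>. L t \<omega> \<partial>M) - \<epsilon> * (\<integral>\<omega>. L t \<omega> * S t \<omega> \<partial>M)"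
proof -
  interpret Ht: sigma_finite_subalgebra M "H t" by (rule sigma_finite_hist_alg)
  have L_H: "L t \<in> borel_measurable (H t)" by (rule L_measurable_hist_alg) simp
  have int_bound: "integrable M (\<lambda>\<omega>. B * L t \<omega> - \<epsilon> * (L t \<omega> * S t \<omega>))"
    by (intro integrable_intros integrable_L integrable_L_S)
  have "(\<integral>\<omega>. L t \<omega> * (L (Suc t) \<omega> - L t \<omega>) \<partial>M)
      = (\<integral>\<omega>. L t \<omega> * real_cond_exp M (H t) (\<lambda>\<omega>. L (Suc t) \<omega> - L t \<omega>) \<omega> \<partial>M)"
    by (rule Ht.real_cond_exp_intg(2)[symmetric, OF integrable_L_dL L_H]) measurable
  also have "\<dots> \<le> (\<integral>\<omega>. B * L t \<omega> - \<epsilon> * (L t \<omega> * S t \<omega>) \<partial>M)"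
  proof (rule integral_mono_AE[OF _ int_bound])
    show "integrable M (\<lambda>\<omega>. L t \<omega> * real_cond_exp M (H t) (\<lambda>\<omega>. L (Suc t) \<omega> - L t \<omega>) \<omega>)"
      by (rule Ht.real_cond_exp_intg(1)[OF integrable_L_dL L_H]) measurable
    show "AE \<omega> in M. L t \<omega> * real_cond_exp M (H t) (\<lambda>\<omega>. L (Suc t) \<omega> - L t \<omega>) \<omega>
        \<le> B * L t \<omega> - \<epsilon> * (L t \<omega> * S t \<omega>)"
      using drift[of t]
    proof eventually_elim
      case (elim \<omega>)
      then have "L t \<omega> * real_cond_exp M (H t) (\<lambda>\<omega>. L (Suc t) \<omega> - L t \<omega>) \<omega>
          \<le> L t \<omega> * (B - \<epsilon> * S t \<omega>)"
        by (rule mult_left_mono[OF _ L_nonneg])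
      then show ?case by (simp add: algebra_simps)
    qed
  qed
  also have "\<dots> = B * (\<integral>\<omega>. L t \<omega> \<partial>M) - \<epsilon> * (\<integral>\<omega>. L t \<omega> * S t \<omega> \<partial>M)"
    using integrable_L integrable_L_S by simp
  finally show ?thesis .
qed

lemma integral_Q2_d2_le:
  assumes k: "k \<in> {1..K}"
  shows "(\<integral>\<omega>. (Q t k \<omega>)\<^sup>2 * (d t k \<omega>)\<^sup>2 \<partial>M) \<le> D' * (\<integral>\<omega>. (Q t k \<omega>)\<^sup>2 \<partial>M)"
proof -
  interpret Ft: sigma_finite_subalgebra M "F t" by (rule sigma_finite_state_alg)
  have [measurable]: "Q t k \<in> borel_measurable M" "Q (Suc t) k \<in> borel_measurable M"
    using Q_meas k by auto
  have Q2_F: "(\<lambda>\<omega>. ennreal ((Q t k \<omega>)\<^sup>2)) \<in> borel_measurable (F t)"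
    using Q_measurable_state_alg[OF k] by measurable
  have "ennreal (\<integral>\<omega>. (Q t k \<omega>)\<^sup>2 * (d t k \<omega>)\<^sup>2 \<partial>M)
      = (\<integral>\<^sup>+\<omega>. ennreal ((Q t k \<omega>)\<^sup>2 * (d t k \<omega>)\<^sup>2) \<partial>M)"
    by (rule nn_integral_eq_integral[symmetric]) (auto intro: integrable_Q2_d2[OF k])
  also have "\<dots> = (\<integral>\<^sup>+\<omega>. ennreal ((Q t k \<omega>)\<^sup>2) * ennreal ((d t k \<omega>)\<^sup>2) \<partial>M)"
    by (simp add: ennreal_mult)
  also have "\<dots> = (\<integral>\<^sup>+\<omega>. ennreal ((Q t k \<omega>)\<^sup>2) * nn_cond_exp M (F t) (\<lambda>\<omega>. ennreal ((d t k \<omega>)\<^sup>2)) \<omega> \<partial>M)"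
    by (rule Ft.nn_cond_exp_intg[symmetric, OF Q2_F]) simp
  also have "\<dots> \<le> (\<integral>\<^sup>+\<omega>. ennreal ((Q t k \<omega>)\<^sup>2) * ennreal D' \<partial>M)"
    using nn_cond_exp_d2_le[OF k, of t]
    by (intro nn_integral_mono_AE) (auto elim!: eventually_mono intro: mult_left_mono)
  also have "\<dots> = (\<integral>\<^sup>+\<omega>. ennreal (D' * (Q t k \<omega>)\<^sup>2) \<partial>M)"
    using D'_pos by (simp add: ennreal_mult mult.commute)
  also have "\<dots> = ennreal (\<integral>\<omega>. D' * (Q t k \<omega>)\<^sup>2 \<partial>M)"
    using D'_pos integrable_Q2[OF k] by (intro nn_integral_eq_integral) auto
  finally show ?thesis
    using D'_pos by (subst (asm) ennreal_le_iff) (auto intro!: integral_nonneg_AE)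
qed

lemma dL_power2_le:
  "(L (Suc t) \<omega> - L t \<omega>)\<^sup>2
    \<le> real K * (\<Sum>k=1..K. (w k)\<^sup>2 * (2 * ((Q t k \<omega>)\<^sup>2 * (d t k \<omega>)\<^sup>2) + (d t k \<omega>) ^ 4 / 2))"
proof -
  have "(L (Suc t) \<omega> - L t \<omega>)\<^sup>2
      \<le> (\<Sum>k=1..K. (w k * (Q t k \<omega> * d t k \<omega> + (d t k \<omega>)\<^sup>2 / 2))\<^sup>2) * card {1..K}"
    unfolding lyap_diff by (rule sum_squared_le_sum_of_squares)
  also have "\<dots> \<le> (\<Sum>k=1..K. (w k)\<^sup>2 * (2 * ((Q t k \<omega>)\<^sup>2 * (d t k \<omega>)\<^sup>2) + (d t k \<omega>) ^ 4 / 2))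
      * card {1..K}"
  proof (rule mult_right_mono[OF sum_mono])
    fix k
    have "(Q t k \<omega> * d t k \<omega> + (d t k \<omega>)\<^sup>2 / 2)\<^sup>2
        \<le> 2 * (Q t k \<omega> * d t k \<omega>)\<^sup>2 + 2 * ((d t k \<omega>)\<^sup>2 / 2)\<^sup>2"
      by (rule square_sum_le)
    then show "(w k * (Q t k \<omega> * d t k \<omega> + (d t k \<omega>)\<^sup>2 / 2))\<^sup>2
        \<le> (w k)\<^sup>2 * (2 * ((Q t k \<omega>)\<^sup>2 * (d t k \<omega>)\<^sup>2) + (d t k \<omega>) ^ 4 / 2)"
      unfolding power_mult_distrib
      by (intro mult_left_mono) (simp_all add: power_mult_distrib power_divide flip: power_mult)
  qed simp
  finally show ?thesis by (simp add: mult.commute)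
qed

definition "cW = real K * (\<Sum>k=1..K. (w k)\<^sup>2)"
definition "var_slope = 2 * cW * D' * cQ"
definition "var_offset = cW * D' / 2"

lemma var_slope_nonneg: "var_slope \<ge> 0"
  unfolding var_slope_def cW_def using D'_pos cQ_nonneg by (simp add: sum_nonneg)

lemma var_offset_nonneg: "var_offset \<ge> 0"
  unfolding var_offset_def cW_def using D'_pos by (simp add: sum_nonneg)

lemma integral_dL2_le:
  "(\<integral>\<omega>. (L (Suc t) \<omega> - L t \<omega>)\<^sup>2 \<partial>M) \<le> var_slope * (\<integral>\<omega>. L t \<omega> \<partial>M) + var_offset"
proof -
  define f where "f k \<omega> = (w k)\<^sup>2 * (2 * ((Q t k \<omega>)\<^sup>2 * (d t k \<omega>)\<^sup>2) + (d t k \<omega>) ^ 4 / 2)" for k \<omega>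
  have int_f: "integrable M (f k)" if k: "k \<in> {1..K}" for k
    unfolding f_def by (intro integrable_intros integrable_Q2_d2[OF k] integrable_d4[OF k] integrable_divide_zero)
  have integral_f: "(\<integral>\<omega>. f k \<omega> \<partial>M) \<le> (w k)\<^sup>2 * (2 * D' * cQ * (\<integral>\<omega>. L t \<omega> \<partial>M) + D' / 2)"
    if k: "k \<in> {1..K}" for k
  proof -
    have "(\<integral>\<omega>. (Q t k \<omega>)\<^sup>2 \<partial>M) \<le> (\<integral>\<omega>. cQ * L t \<omega> \<partial>M)"
      by (intro integral_mono integrable_Q2[OF k] integrable_mult_right integrable_L Q_power2_le[OF k])
    then have "D' * (\<integral>\<omega>. (Q t k \<omega>)\<^sup>2 \<partial>M) \<le> D' * (cQ * (\<integral>\<omega>. L t \<omega> \<partial>M))"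
      using D'_pos by (intro mult_left_mono) auto
    then have "2 * (\<integral>\<omega>. (Q t k \<omega>)\<^sup>2 * (d t k \<omega>)\<^sup>2 \<partial>M) + (\<integral>\<omega>. (d t k \<omega>) ^ 4 \<partial>M) / 2
        \<le> 2 * D' * cQ * (\<integral>\<omega>. L t \<omega> \<partial>M) + D' / 2"
      using integral_Q2_d2_le[OF k, of t] integral_d4_le[OF k, of t] by (simp add: ac_simps)
    then show ?thesis
      unfolding f_def using integrable_Q2_d2[OF k] integrable_d4[OF k]
      by (simp add: mult_left_mono)
  qed
  have "(\<integral>\<omega>. (L (Suc t) \<omega> - L t \<omega>)\<^sup>2 \<partial>M) \<le> (\<integral>\<omega>. real K * (\<Sum>k=1..K. f k \<omega>) \<partial>M)"
    unfolding f_def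
    by (intro integral_mono integrable_dL2 dL_power2_le integrable_mult_right
        Bochner_Integration.integrable_sum int_f[unfolded f_def])
  also have "\<dots> = real K * (\<Sum>k=1..K. (\<integral>\<omega>. f k \<omega> \<partial>M))"
    using int_f by simp
  also have "\<dots> \<le> real K * (\<Sum>k=1..K. (w k)\<^sup>2 * (2 * D' * cQ * (\<integral>\<omega>. L t \<omega> \<partial>M) + D' / 2))"
    by (intro mult_left_mono sum_mono integral_f) auto
  also have "\<dots> = cW * (2 * D' * cQ * (\<integral>\<omega>. L t \<omega> \<partial>M) + D' / 2)"
    unfolding cW_def by (simp add: sum_distrib_right)
  also have "\<dots> = var_slope * (\<integral>\<omega>. L t \<omega> \<partial>M) + var_offset"
    unfolding var_slope_def var_offset_def by (simp add: algebra_simps)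
  finally show ?thesis .
qed

lemma integral_L_le_N3:
  assumes "\<delta> > 0"
  shows "(\<integral>\<omega>. L t \<omega> \<partial>M) \<le> \<delta> * (\<integral>\<omega>. N t \<omega> ^ 3 \<partial>M) + 1 / \<delta>\<^sup>2"
proof -
  have "(\<integral>\<omega>. L t \<omega> \<partial>M) \<le> (\<integral>\<omega>. \<delta> * N t \<omega> ^ 3 + 1 / \<delta>\<^sup>2 \<partial>M)"
    using square_le_cube[OF N_nonneg assms]
    by (intro integral_mono integrable_L integrable_intros integrable_N3) (simp add: N_power2)
  then show ?thesis using integrable_N3[of t] by (simp add: prob_space)
qed

lemma integral_N3_le:
  "(\<integral>\<omega>. N t \<omega> ^ 3 \<partial>M) \<le> cN * (\<integral>\<omega>. L t \<omega> * S t \<omega> \<partial>M)"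
proof -
  have "N t \<omega> ^ 3 \<le> cN * (L t \<omega> * S t \<omega>)" for \<omega>
  proof -
    have "N t \<omega> ^ 3 = L t \<omega> * N t \<omega>"
      by (simp add: power3_eq_cube N_power2[symmetric] power2_eq_square)
    also have "\<dots> \<le> L t \<omega> * (cN * S t \<omega>)" by (rule mult_left_mono[OF N_le_S L_nonneg])
    finally show ?thesis by (simp add: ac_simps)
  qed
  then have "(\<integral>\<omega>. N t \<omega> ^ 3 \<partial>M) \<le> (\<integral>\<omega>. cN * (L t \<omega> * S t \<omega>) \<partial>M)"
    by (intro integral_mono integrable_N3 integrable_mult_right integrable_L_S)
  then show ?thesis by simp
qed

lemma integral_L2_Suc:
  "(\<integral>\<omega>. (L (Suc t) \<omega>)\<^sup>2 \<partial>M) = (\<integral>\<omega>. (L t \<omega>)\<^sup>2 \<partial>M)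
    + 2 * (\<integral>\<omega>. L t \<omega> * (L (Suc t) \<omega> - L t \<omega>) \<partial>M) + (\<integral>\<omega>. (L (Suc t) \<omega> - L t \<omega>)\<^sup>2 \<partial>M)"
proof -
  have "(\<integral>\<omega>. (L (Suc t) \<omega>)\<^sup>2 \<partial>M) = (\<integral>\<omega>. (L t \<omega>)\<^sup>2 + 2 * (L t \<omega> * (L (Suc t) \<omega> - L t \<omega>))
      + (L (Suc t) \<omega> - L t \<omega>)\<^sup>2 \<partial>M)"
    by (rule Bochner_Integration.integral_cong) (auto simp: power2_eq_square algebra_simps)
  then show ?thesis
    using integrable_L2[of t] integrable_L_dL[of t] integrable_dL2[of t] by simp
qed

definition "step_const = (2 * B + var_slope) ^ 3 * (cN / \<epsilon>)\<^sup>2 + var_offset"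

lemma step_const_nonneg: "step_const \<ge> 0"
  unfolding step_const_def using B_pos var_slope_nonneg var_offset_nonneg by simp

lemma integral_L2_step:
  "(\<integral>\<omega>. (L (Suc t) \<omega>)\<^sup>2 \<partial>M) + (\<epsilon> / cN) * (\<integral>\<omega>. N t \<omega> ^ 3 \<partial>M)
    \<le> (\<integral>\<omega>. (L t \<omega>)\<^sup>2 \<partial>M) + step_const"
proof -
  define A where "A = 2 * B + var_slope"
  define \<delta> where "\<delta> = \<epsilon> / (cN * A)"
  have A_pos: "A > 0" unfolding A_def using B_pos var_slope_nonneg by simp
  have \<delta>_pos: "\<delta> > 0" unfolding \<delta>_def using A_pos cN_pos eps_pos by simp
  \<comment> \<open>the linear term \<open>A * E[L t]\<close> is absorbed by half of the cubic gain\<close>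
  have "A * (\<integral>\<omega>. L t \<omega> \<partial>M) \<le> A * (\<delta> * (\<integral>\<omega>. N t \<omega> ^ 3 \<partial>M) + 1 / \<delta>\<^sup>2)"
    using A_pos by (intro mult_left_mono integral_L_le_N3 \<delta>_pos) auto
  also have "\<dots> = (\<epsilon> / cN) * (\<integral>\<omega>. N t \<omega> ^ 3 \<partial>M) + A ^ 3 * (cN / \<epsilon>)\<^sup>2"
    unfolding \<delta>_def using A_pos cN_pos eps_pos by (simp add: field_simps power2_eq_square power3_eq_cube)
  finally have "A * (\<integral>\<omega>. L t \<omega> \<partial>M)
      \<le> (\<epsilon> / cN) * (\<integral>\<omega>. N t \<omega> ^ 3 \<partial>M) + A ^ 3 * (cN / \<epsilon>)\<^sup>2" .
  moreover have "(\<epsilon> / cN) * (\<integral>\<omega>. N t \<omega> ^ 3 \<partial>M) \<le> \<epsilon> * (\<integral>\<omega>. L t \<omega> * S t \<omega> \<partial>M)"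
    using mult_left_mono[OF integral_N3_le, of "\<epsilon> / cN" t] cN_pos eps_pos by simp
  ultimately show ?thesis
    using integral_L2_Suc[of t] integral_L_dL_le[of t] integral_dL2_le[of t]
    unfolding step_const_def A_def by (simp add: algebra_simps)
qed

lemma integral_N3_nonneg: "(\<integral>\<omega>. N t \<omega> ^ 3 \<partial>M) \<ge> 0"
  by (simp add: N_nonneg)

lemma integral_L2_nonneg: "(\<integral>\<omega>. (L t \<omega>)\<^sup>2 \<partial>M) \<ge> 0"
  by simp

lemma integral_L2_telescope:
  "(\<epsilon> / cN) * (\<Sum>t<m. (\<integral>\<omega>. N t \<omega> ^ 3 \<partial>M)) + (\<integral>\<omega>. (L m \<omega>)\<^sup>2 \<partial>M)
    \<le> (\<integral>\<omega>. (L 0 \<omega>)\<^sup>2 \<partial>M) + step_const * real m"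
proof (induction m)
  case (Suc m)
  then show ?case using integral_L2_step[of m] by (simp add: algebra_simps)
qed simp

lemma integral_L2_le: "(\<integral>\<omega>. (L t \<omega>)\<^sup>2 \<partial>M) \<le> (\<integral>\<omega>. (L 0 \<omega>)\<^sup>2 \<partial>M) + step_const * real t"
proof -
  have "0 \<le> (\<epsilon> / cN) * (\<Sum>s<t. (\<integral>\<omega>. N s \<omega> ^ 3 \<partial>M))"
    using eps_pos cN_pos by (intro mult_nonneg_nonneg sum_nonneg integral_N3_nonneg) auto
  then show ?thesis using integral_L2_telescope[of t] by linarith
qed

definition "cube_const = cN / \<epsilon> * ((\<integral>\<omega>. (L 0 \<omega>)\<^sup>2 \<partial>M) + step_const) + 1"

lemma cube_const_pos: "cube_const > 0"
  unfolding cube_const_def using cN_pos eps_pos step_const_nonneg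
  by (simp add: add_nonneg_pos)

lemma sum_integral_N3_le:
  assumes "m \<ge> 1"
  shows "(\<Sum>t<m. (\<integral>\<omega>. N t \<omega> ^ 3 \<partial>M)) \<le> cube_const * real m"
proof -
  have "(\<epsilon> / cN) * (\<Sum>t<m. (\<integral>\<omega>. N t \<omega> ^ 3 \<partial>M)) \<le> (\<integral>\<omega>. (L 0 \<omega>)\<^sup>2 \<partial>M) + step_const * real m"
    using integral_L2_telescope[of m] integral_L2_nonneg[of m] by linarith
  also have "\<dots> \<le> ((\<integral>\<omega>. (L 0 \<omega>)\<^sup>2 \<partial>M) + step_const) * real m"
    using assms integral_L2_nonneg[of 0] mult_left_mono[of 1 "real m" "\<integral>\<omega>. (L 0 \<omega>)\<^sup>2 \<partial>M"]
    by (simp add: algebra_simps)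
  finally have "(\<Sum>t<m. (\<integral>\<omega>. N t \<omega> ^ 3 \<partial>M)) \<le> cN / \<epsilon> * (((\<integral>\<omega>. (L 0 \<omega>)\<^sup>2 \<partial>M) + step_const) * real m)"
    using eps_pos cN_pos by (simp add: field_simps)
  also have "\<dots> \<le> cube_const * real m"
    unfolding cube_const_def by (simp add: algebra_simps)
  finally show ?thesis .
qed

lemma average_cube_moment_bounded:
  "\<exists>b > 0. \<forall>m::nat. m \<ge> 1 \<longrightarrow>
     (\<Sum>t<m. \<integral>\<^sup>+ \<omega>. ennreal (N t \<omega> ^ 3) \<partial>M) \<le> ennreal (b * real m)"
proof (intro exI[of _ cube_const] conjI allI impI cube_const_pos)
  fix m :: nat assume m: "m \<ge> 1"
  have "(\<Sum>t<m. \<integral>\<^sup>+ \<omega>. ennreal (N t \<omega> ^ 3) \<partial>M) = (\<Sum>t<m. ennreal (\<integral>\<omega>. N t \<omega> ^ 3 \<partial>M))"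
    by (intro sum.cong refl nn_integral_eq_integral) (auto intro: integrable_N3 simp: N_nonneg)
  also have "\<dots> = ennreal (\<Sum>t<m. (\<integral>\<omega>. N t \<omega> ^ 3 \<partial>M))"
    by (rule sum_ennreal) (rule integral_N3_nonneg)
  also have "\<dots> \<le> ennreal (cube_const * real m)"
    by (rule ennreal_leI[OF sum_integral_N3_le[OF m]])
  finally show "(\<Sum>t<m. \<integral>\<^sup>+ \<omega>. ennreal (N t \<omega> ^ 3) \<partial>M) \<le> ennreal (cube_const * real m)" .
qed

section \<open>Negative drift of the norm\<close>

text \<open>The conditional form of \<open>sqrt x \<le> x / (2m) + m / 2\<close>; the lower cutoff \<open>a\<close> makes
  \<open>m = max (N t) a\<close> positive while keeping it \<open>F t\<close>-measurable.\<close>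

lemma cond_exp_N_Suc_le:
  assumes a: "a > 0"
  shows "AE \<omega> in M. real_cond_exp M (F t) (N (Suc t)) \<omega>
    \<le> real_cond_exp M (F t) (L (Suc t)) \<omega> / (2 * max (N t \<omega>) a) + max (N t \<omega>) a / 2"
proof -
  interpret Ft: sigma_finite_subalgebra M "F t" by (rule sigma_finite_state_alg)
  define m where "m \<omega> = max (N t \<omega>) a" for \<omega>
  define h where "h \<omega> = 1 / (2 * m \<omega>)" for \<omega>
  have m_pos: "m \<omega> > 0" for \<omega> unfolding m_def using a by simp
  have m_F: "m \<in> borel_measurable (F t)"
    unfolding m_def using L_N_S_measurable_state_alg(2) by measurable
  have h_F: "h \<in> borel_measurable (F t)" unfolding h_def using m_F by measurable
  have [measurable]: "m \<in> borel_measurable M" "h \<in> borel_measurable M"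
    using measurable_from_subalg[OF subalgebra_state_alg] m_F h_F by auto
  have int_hL: "integrable M (\<lambda>\<omega>. h \<omega> * L (Suc t) \<omega>)"
  proof (rule integrable_dominated[of _ "\<lambda>\<omega>. 1 / (2 * a) * L (Suc t) \<omega>"])
    show "\<bar>h \<omega> * L (Suc t) \<omega>\<bar> \<le> 1 / (2 * a) * L (Suc t) \<omega>" for \<omega>
      using a L_nonneg[of "Suc t" \<omega>] m_pos[of \<omega>]
      by (simp add: h_def m_def abs_mult frac_le mult_right_mono)
  qed (auto intro: integrable_L)
  have int_m: "integrable M (\<lambda>\<omega>. m \<omega> / 2)"
    by (rule integrable_dominated[of _ "\<lambda>\<omega>. N t \<omega> + a"])
      (use N_nonneg a in \<open>auto simp: m_def intro: integrable_N\<close>)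
  have "AE \<omega> in M. real_cond_exp M (F t) (N (Suc t)) \<omega>
      \<le> real_cond_exp M (F t) (\<lambda>\<omega>. h \<omega> * L (Suc t) \<omega> + m \<omega> / 2) \<omega>"
    using sqrt_le_div_plus[OF L_nonneg m_pos]
    by (intro Ft.real_cond_exp_mono integrable_N Bochner_Integration.integrable_add int_hL int_m)
      (simp add: lnorm_def h_def)
  moreover have "AE \<omega> in M. real_cond_exp M (F t) (\<lambda>\<omega>. h \<omega> * L (Suc t) \<omega> + m \<omega> / 2) \<omega>
      = real_cond_exp M (F t) (\<lambda>\<omega>. h \<omega> * L (Suc t) \<omega>) \<omega> + real_cond_exp M (F t) (\<lambda>\<omega>. m \<omega> / 2) \<omega>"
    by (rule Ft.real_cond_exp_add[OF int_hL int_m])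
  moreover have "AE \<omega> in M. real_cond_exp M (F t) (\<lambda>\<omega>. h \<omega> * L (Suc t) \<omega>) \<omega>
      = h \<omega> * real_cond_exp M (F t) (L (Suc t)) \<omega>"
    by (rule Ft.real_cond_exp_mult[OF h_F _ int_hL]) measurable
  moreover have "AE \<omega> in M. real_cond_exp M (F t) (\<lambda>\<omega>. m \<omega> / 2) \<omega> = m \<omega> / 2"
    by (rule Ft.real_cond_exp_F_meas[OF int_m]) (use m_F in measurable)
  ultimately show ?thesis
    by eventually_elim (simp add: h_def m_def)
qed

lemma cond_exp_N_Suc_drift:
  "AE \<omega> in M. N t \<omega> \<ge> 2 * B * cN / \<epsilon> \<longrightarrow>
    real_cond_exp M (F t) (N (Suc t)) \<omega> \<le> N t \<omega> - \<epsilon> / (4 * cN)"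
proof -
  define a where "a = 2 * B * cN / \<epsilon>"
  have a_pos: "a > 0" unfolding a_def using B_pos cN_pos eps_pos by simp
  show ?thesis
    using cond_exp_N_Suc_le[OF a_pos, of t] cond_exp_L_state_alg_le[of t]
  proof eventually_elim
    case (elim \<omega>)
    show ?case
    proof
      assume "2 * B * cN / \<epsilon> \<le> N t \<omega>"
      then have N_ge: "a \<le> N t \<omega>" by (simp add: a_def)
      then have N_pos: "N t \<omega> > 0" using a_pos by simp
      have "B \<le> \<epsilon> * N t \<omega> / (2 * cN)"
        using N_ge cN_pos eps_pos by (simp add: a_def field_simps)
      moreover have "\<epsilon> * N t \<omega> / cN \<le> \<epsilon> * S t \<omega>"
        using N_le_S[of t \<omega>] cN_pos eps_pos by (simp add: field_simps)
      moreover have "\<epsilon> * N t \<omega> / cN = 2 * (\<epsilon> * N t \<omega> / (2 * cN))"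
        by simp
      ultimately have L_le: "real_cond_exp M (F t) (L (Suc t)) \<omega>
          \<le> (N t \<omega>)\<^sup>2 - \<epsilon> * N t \<omega> / (2 * cN)"
        using elim(2) N_power2[of t \<omega>] by linarith
      have "max (N t \<omega>) a = N t \<omega>" using N_ge by simp
      then have "real_cond_exp M (F t) (N (Suc t)) \<omega>
          \<le> real_cond_exp M (F t) (L (Suc t)) \<omega> / (2 * N t \<omega>) + N t \<omega> / 2"
        using elim(1) by simp
      also have "\<dots> \<le> ((N t \<omega>)\<^sup>2 - \<epsilon> * N t \<omega> / (2 * cN)) / (2 * N t \<omega>) + N t \<omega> / 2"
        using L_le N_pos by (intro add_right_mono divide_right_mono) auto
      also have "\<dots> = N t \<omega> - \<epsilon> / (4 * cN)"
        using N_pos cN_pos by (simp add: field_simps power2_eq_square)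
      finally show "real_cond_exp M (F t) (N (Suc t)) \<omega> \<le> N t \<omega> - \<epsilon> / (4 * cN)" .
    qed
  qed
qed

section \<open>Growth of second moments\<close>

definition "growth_const = (\<integral>\<omega>. (L 0 \<omega>)\<^sup>2 \<partial>M) + step_const + 1"

lemma growth_const_pos: "growth_const > 0"
  unfolding growth_const_def using integral_L2_nonneg[of 0] step_const_nonneg by linarith

lemma integral_L_le_sqrt: "(\<integral>\<omega>. L (Suc t) \<omega> \<partial>M) \<le> growth_const * sqrt (real (Suc t))"
proof -
  define r where "r = sqrt (real (Suc t))"
  have r1: "r \<ge> 1" unfolding r_def by simp
  have "(\<integral>\<omega>. L (Suc t) \<omega> \<partial>M) \<le> (\<integral>\<omega>. (L (Suc t) \<omega>)\<^sup>2 / (2 * r) + r / 2 \<partial>M)"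
    using r1 by (intro integral_mono integrable_L integrable_intros integrable_divide_zero integrable_L2
        le_square_div_plus) auto
  also have "\<dots> = (\<integral>\<omega>. (L (Suc t) \<omega>)\<^sup>2 \<partial>M) / (2 * r) + r / 2"
    using integrable_L2[of "Suc t"] by (simp add: prob_space)
  also have "\<dots> \<le> ((\<integral>\<omega>. (L 0 \<omega>)\<^sup>2 \<partial>M) + step_const) * r\<^sup>2 / (2 * r) + r / 2"
  proof -
    have "r\<^sup>2 = real (Suc t)" unfolding r_def by simp
    then have "(\<integral>\<omega>. (L (Suc t) \<omega>)\<^sup>2 \<partial>M) \<le> (\<integral>\<omega>. (L 0 \<omega>)\<^sup>2 \<partial>M) + step_const * r\<^sup>2"
      using integral_L2_le[of "Suc t"] by simp
    also have "\<dots> \<le> ((\<integral>\<omega>. (L 0 \<omega>)\<^sup>2 \<partial>M) + step_const) * r\<^sup>2"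
    proof -
      have "(\<integral>\<omega>. (L 0 \<omega>)\<^sup>2 \<partial>M) * 1 \<le> (\<integral>\<omega>. (L 0 \<omega>)\<^sup>2 \<partial>M) * r\<^sup>2"
        using r1 integral_L2_nonneg[of 0] by (intro mult_left_mono) auto
      then show ?thesis by (simp add: algebra_simps)
    qed
    finally show ?thesis using r1 by (intro add_right_mono divide_right_mono) auto
  qed
  also have "\<dots> \<le> growth_const * r"
    unfolding growth_const_def using r1 integral_L2_nonneg[of 0] step_const_nonneg
    by (simp add: field_simps power2_eq_square)
  finally show ?thesis unfolding r_def .
qed

lemma nn_integral_Q2_div_le:
  assumes k: "k \<in> {1..K}"
  shows "(\<integral>\<^sup>+ \<omega>. ennreal ((Q (Suc t) k \<omega> / real (Suc t))\<^sup>2) \<partial>M)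
     \<le> ennreal (cQ * growth_const * real (Suc t) powr (-3/2))"
proof -
  define s where "s = real (Suc t)"
  have s_pos: "s > 0" unfolding s_def by simp
  have "(\<integral>\<^sup>+ \<omega>. ennreal ((Q (Suc t) k \<omega> / s)\<^sup>2) \<partial>M)
      = (\<integral>\<^sup>+ \<omega>. ennreal ((Q (Suc t) k \<omega>)\<^sup>2 / s\<^sup>2) \<partial>M)"
    by (simp add: power_divide)
  also have "\<dots> = ennreal (\<integral>\<omega>. (Q (Suc t) k \<omega>)\<^sup>2 / s\<^sup>2 \<partial>M)"
    using integrable_Q2[OF k] by (intro nn_integral_eq_integral) auto
  also have "(\<integral>\<omega>. (Q (Suc t) k \<omega>)\<^sup>2 / s\<^sup>2 \<partial>M) = (\<integral>\<omega>. (Q (Suc t) k \<omega>)\<^sup>2 \<partial>M) / s\<^sup>2"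
    by simp
  also have "(\<integral>\<omega>. (Q (Suc t) k \<omega>)\<^sup>2 \<partial>M) \<le> cQ * (\<integral>\<omega>. L (Suc t) \<omega> \<partial>M)"
    using integral_mono[OF integrable_Q2[OF k] integrable_mult_right[OF integrable_L] Q_power2_le[OF k]]
    by simp
  also have "\<dots> \<le> cQ * (growth_const * sqrt s)"
    unfolding s_def by (rule mult_left_mono[OF integral_L_le_sqrt cQ_nonneg])
  also have "cQ * (growth_const * sqrt s) / s\<^sup>2 = cQ * growth_const * s powr (-3/2)"
  proof -
    have "s powr (-3/2) = s powr (1/2) / s powr 2"
      by (simp add: powr_diff[symmetric])
    moreover have "s powr 2 = s\<^sup>2" using s_pos by simp
    ultimately show ?thesis using s_pos by (simp add: powr_half_sqrt)
  qed
  finally show ?thesis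
    using s_pos by (simp add: s_def divide_right_mono ennreal_leI)
qed

lemma summable_Q2_div:
  assumes k: "k \<in> {1..K}"
  shows "(\<Sum>t. \<integral>\<^sup>+ \<omega>. ennreal ((Q (Suc t) k \<omega> / real (Suc t))\<^sup>2) \<partial>M) < \<infinity>"
proof -
  have "summable (\<lambda>t. real (Suc t) powr (-3/2))"
    using summable_Suc_iff[where f = "\<lambda>n. real n powr (-3/2)"] summable_real_powr_iff by auto
  then have "(\<Sum>t. ennreal (cQ * growth_const * real (Suc t) powr (-3/2))) \<noteq> top"
    using cQ_nonneg growth_const_pos by (intro ennreal_suminf_neq_top summable_mult) auto
  moreover have "(\<Sum>t. \<integral>\<^sup>+ \<omega>. ennreal ((Q (Suc t) k \<omega> / real (Suc t))\<^sup>2) \<partial>M)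
      \<le> (\<Sum>t. ennreal (cQ * growth_const * real (Suc t) powr (-3/2)))"
    by (intro suminf_le nn_integral_Q2_div_le[OF k] summableI)
  ultimately show ?thesis by (simp add: less_top top_unique)
qed

lemma second_moments_div_time_summable:
  assumes k: "k \<in> {1..K}"
  shows "(\<Sum>t. ennreal (1 / (real (Suc t))\<^sup>2) * (\<integral>\<^sup>+ \<omega>. ennreal ((Q (Suc t) k \<omega>)\<^sup>2) \<partial>M)) < \<infinity>"
proof -
  have [measurable]: "Q t k \<in> borel_measurable M" for t using Q_meas[OF k] .
  have "ennreal (1 / (real (Suc t))\<^sup>2) * (\<integral>\<^sup>+ \<omega>. ennreal ((Q (Suc t) k \<omega>)\<^sup>2) \<partial>M)
      = (\<integral>\<^sup>+ \<omega>. ennreal ((Q (Suc t) k \<omega> / real (Suc t))\<^sup>2) \<partial>M)" for t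
    by (subst nn_integral_cmult[symmetric]) (auto simp: power_divide simp flip: ennreal_mult)
  then show ?thesis using summable_Q2_div[OF k] by simp
qed

lemma Q_div_time_tendsto_zero:
  assumes k: "k \<in> {1..K}"
  shows "AE \<omega> in M. (\<lambda>t. Q t k \<omega> / real t) \<longlonglongrightarrow> 0"
proof -
  have [measurable]: "Q t k \<in> borel_measurable M" for t using Q_meas[OF k] .
  have "(\<lambda>\<omega>. Q (Suc t) k \<omega> / real (Suc t)) \<in> borel_measurable M" for t
    by measurable
  from AE_LIMSEQ_zero_if_summable_second_moments[OF this summable_Q2_div[OF k]]
  show ?thesis
  proof eventually_elim
    case (elim \<omega>)
    then show ?case by (rule LIMSEQ_imp_Suc)
  qed
qed

section \<open>Time averages along paths\<close>

text \<open>Doob decomposition of \<open>L\<close> with respect to the histories: \<open>mart\<close> is the martingale of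
  compensated increments.\<close>

definition "cond_drift t \<omega> = real_cond_exp M (H t) (\<lambda>\<omega>. L (Suc t) \<omega> - L t \<omega>) \<omega>"
definition "mart_incr t \<omega> = (L (Suc t) \<omega> - L t \<omega>) - cond_drift t \<omega>"
definition "mart n \<omega> = (\<Sum>\<tau><n. mart_incr \<tau> \<omega>)"

lemma cond_drift_borel_measurable [measurable]: "cond_drift t \<in> borel_measurable M"
  unfolding cond_drift_def[abs_def] by (rule borel_measurable_cond_exp2)

lemma mart_incr_borel_measurable [measurable]: "mart_incr t \<in> borel_measurable M"
  unfolding mart_incr_def[abs_def] by measurable

lemma mart_borel_measurable [measurable]: "mart n \<in> borel_measurable M"
  unfolding mart_def[abs_def] by measurable

lemma mart_incr_measurable_hist_alg: "t < s \<Longrightarrow> mart_incr t \<in> borel_measurable (H s)"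
  unfolding mart_incr_def[abs_def] cond_drift_def[abs_def]
  by (intro borel_measurable_diff L_measurable_hist_alg
      measurable_from_subalg[OF hist_alg_mono borel_measurable_cond_exp]) auto

lemma mart_measurable_hist_alg: "mart n \<in> borel_measurable (H n)"
  unfolding mart_def[abs_def] by (intro borel_measurable_sum mart_incr_measurable_hist_alg) auto

lemma cond_drift_second_moment:
  "integrable M (\<lambda>\<omega>. (cond_drift t \<omega>)\<^sup>2)
    \<and> (\<integral>\<omega>. (cond_drift t \<omega>)\<^sup>2 \<partial>M) \<le> (\<integral>\<omega>. (L (Suc t) \<omega> - L t \<omega>)\<^sup>2 \<partial>M)"
proof -
  interpret Ht: sigma_finite_subalgebra M "H t" by (rule sigma_finite_hist_alg)
  have jensen: "AE \<omega> in M. (cond_drift t \<omega>)\<^sup>2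
      \<le> real_cond_exp M (H t) (\<lambda>\<omega>. (L (Suc t) \<omega> - L t \<omega>)\<^sup>2) \<omega>"
    unfolding cond_drift_def
    by (rule Ht.real_cond_exp_jensens_inequality(2)[where I=UNIV,
          OF integrable_dL _ _ integrable_dL2 convex_power2]) auto
  have int_ce: "integrable M (real_cond_exp M (H t) (\<lambda>\<omega>. (L (Suc t) \<omega> - L t \<omega>)\<^sup>2))"
    by (rule Ht.real_cond_exp_int(1)[OF integrable_dL2])
  have int: "integrable M (\<lambda>\<omega>. (cond_drift t \<omega>)\<^sup>2)"
    by (rule Bochner_Integration.integrable_bound[OF int_ce]) (use jensen in auto)
  have "(\<integral>\<omega>. (cond_drift t \<omega>)\<^sup>2 \<partial>M)
      \<le> (\<integral>\<omega>. real_cond_exp M (H t) (\<lambda>\<omega>. (L (Suc t) \<omega> - L t \<omega>)\<^sup>2) \<omega> \<partial>M)"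
    by (rule integral_mono_AE[OF int int_ce jensen])
  also have "\<dots> = (\<integral>\<omega>. (L (Suc t) \<omega> - L t \<omega>)\<^sup>2 \<partial>M)"
    by (rule Ht.real_cond_exp_int(2)[OF integrable_dL2])
  finally show ?thesis using int by simp
qed

lemma integrable_mart_incr2: "integrable M (\<lambda>\<omega>. (mart_incr t \<omega>)\<^sup>2)"
  by (rule integrable_dominated[of _ "\<lambda>\<omega>. 2 * (L (Suc t) \<omega> - L t \<omega>)\<^sup>2 + 2 * (cond_drift t \<omega>)\<^sup>2"])
    (use cond_drift_second_moment in \<open>auto intro!: integrable_dL2
      simp: mart_incr_def intro: square_sum_le[of "L (Suc t) _ - L t _" "- cond_drift t _", simplified]\<close>)

lemma integral_mart_incr2_le:
  "(\<integral>\<omega>. (mart_incr t \<omega>)\<^sup>2 \<partial>M) \<le> 4 * (\<integral>\<omega>. (L (Suc t) \<omega> - L t \<omega>)\<^sup>2 \<partial>M)"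
proof -
  have int_Y2: "integrable M (\<lambda>\<omega>. (cond_drift t \<omega>)\<^sup>2)"
    using cond_drift_second_moment by simp
  have "(\<integral>\<omega>. (mart_incr t \<omega>)\<^sup>2 \<partial>M)
      \<le> (\<integral>\<omega>. 2 * (L (Suc t) \<omega> - L t \<omega>)\<^sup>2 + 2 * (cond_drift t \<omega>)\<^sup>2 \<partial>M)"
    using square_sum_le[of "L (Suc t) _ - L t _" "- cond_drift t _"]
    by (intro integral_mono integrable_mart_incr2 integrable_intros integrable_dL2 int_Y2)
      (simp add: mart_incr_def)
  also have "\<dots> = 2 * (\<integral>\<omega>. (L (Suc t) \<omega> - L t \<omega>)\<^sup>2 \<partial>M) + 2 * (\<integral>\<omega>. (cond_drift t \<omega>)\<^sup>2 \<partial>M)"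
    using integrable_dL2[of t] int_Y2 by simp
  finally show ?thesis using cond_drift_second_moment[of t] by linarith
qed

lemma integrable_mart2: "integrable M (\<lambda>\<omega>. (mart n \<omega>)\<^sup>2)"
proof (induction n)
  case (Suc n)
  show ?case
    by (rule integrable_dominated[of _ "\<lambda>\<omega>. 2 * (mart n \<omega>)\<^sup>2 + 2 * (mart_incr n \<omega>)\<^sup>2"])
      (use Suc integrable_mart_incr2 square_sum_le in \<open>auto simp: mart_def\<close>)
qed (simp add: mart_def)

lemma integral_mart_mult_incr: "(\<integral>\<omega>. mart n \<omega> * mart_incr n \<omega> \<partial>M) = 0"
proof -
  interpret Hn: sigma_finite_subalgebra M "H n" by (rule sigma_finite_hist_alg)
  have int1: "integrable M (\<lambda>\<omega>. mart n \<omega> * (L (Suc n) \<omega> - L n \<omega>))"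
    by (rule integrable_dominated[OF _ _ abs_mult_le_sum_squares])
      (auto intro: integrable_mart2 integrable_dL2)
  have int2: "integrable M (\<lambda>\<omega>. mart n \<omega> * cond_drift n \<omega>)"
    by (rule integrable_dominated[OF _ _ abs_mult_le_sum_squares])
      (use cond_drift_second_moment in \<open>auto intro: integrable_mart2\<close>)
  have "(\<integral>\<omega>. mart n \<omega> * cond_drift n \<omega> \<partial>M) = (\<integral>\<omega>. mart n \<omega> * (L (Suc n) \<omega> - L n \<omega>) \<partial>M)"
    unfolding cond_drift_def by (rule Hn.real_cond_exp_intg(2)[OF int1 mart_measurable_hist_alg]) measurable
  then show ?thesis
    using int1 int2 by (simp add: mart_incr_def right_diff_distrib)
qed

lemma integral_mart2_Suc_le:
  "(\<integral>\<omega>. (mart (Suc n) \<omega>)\<^sup>2 \<partial>M)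
    \<le> (\<integral>\<omega>. (mart n \<omega>)\<^sup>2 \<partial>M) + 4 * (\<integral>\<omega>. (L (Suc n) \<omega> - L n \<omega>)\<^sup>2 \<partial>M)"
proof -
  have int: "integrable M (\<lambda>\<omega>. mart n \<omega> * mart_incr n \<omega>)"
    by (rule integrable_dominated[OF _ _ abs_mult_le_sum_squares])
      (auto intro: integrable_mart2 integrable_mart_incr2)
  have "(\<integral>\<omega>. (mart (Suc n) \<omega>)\<^sup>2 \<partial>M)
      = (\<integral>\<omega>. (mart n \<omega>)\<^sup>2 + 2 * (mart n \<omega> * mart_incr n \<omega>) + (mart_incr n \<omega>)\<^sup>2 \<partial>M)"
    by (rule Bochner_Integration.integral_cong) (auto simp: mart_def power2_eq_square algebra_simps)
  also have "\<dots> = (\<integral>\<omega>. (mart n \<omega>)\<^sup>2 \<partial>M) + 2 * (\<integral>\<omega>. mart n \<omega> * mart_incr n \<omega> \<partial>M)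
      + (\<integral>\<omega>. (mart_incr n \<omega>)\<^sup>2 \<partial>M)"
    using integrable_mart2[of n] int integrable_mart_incr2[of n] by simp
  finally show ?thesis
    using integral_mart_mult_incr[of n] integral_mart_incr2_le[of n] by linarith
qed

lemma integral_dL2_le_N3:
  "(\<integral>\<omega>. (L (Suc t) \<omega> - L t \<omega>)\<^sup>2 \<partial>M) \<le> var_slope + var_offset + var_slope * (\<integral>\<omega>. N t \<omega> ^ 3 \<partial>M)"
  using integral_dL2_le[of t] mult_left_mono[OF integral_L_le_N3[of 1 t] var_slope_nonneg]
  by (simp add: algebra_simps)

definition "mart_const = 4 * (var_slope + var_offset + var_slope * cube_const)"

lemma mart_const_nonneg: "mart_const \<ge> 0"
  unfolding mart_const_def using var_slope_nonneg var_offset_nonneg cube_const_pos by simp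

lemma integral_mart2_le: "(\<integral>\<omega>. (mart n \<omega>)\<^sup>2 \<partial>M) \<le> mart_const * real n"
proof (cases "n = 0")
  case False
  have "(\<integral>\<omega>. (mart n \<omega>)\<^sup>2 \<partial>M)
      \<le> 4 * (\<Sum>\<tau><n. var_slope + var_offset + var_slope * (\<integral>\<omega>. N \<tau> \<omega> ^ 3 \<partial>M))"
  proof (induction n)
    case (Suc n)
    then show ?case using integral_mart2_Suc_le[of n] integral_dL2_le_N3[of n] by simp
  qed (simp add: mart_def)
  also have "\<dots> = 4 * ((var_slope + var_offset) * real n + var_slope * (\<Sum>\<tau><n. (\<integral>\<omega>. N \<tau> \<omega> ^ 3 \<partial>M)))"
    by (simp add: sum.distrib sum_distrib_left)
  also have "\<dots> \<le> 4 * ((var_slope + var_offset) * real n + var_slope * (cube_const * real n))"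
    using False sum_integral_N3_le[of n] var_slope_nonneg by (simp add: mult_left_mono)
  finally show ?thesis unfolding mart_const_def by (simp add: algebra_simps)
qed (simp add: mart_def)

lemma mart_squares_tendsto_zero: "AE \<omega> in M. (\<lambda>n. mart (n\<^sup>2) \<omega> / real (n\<^sup>2)) \<longlonglongrightarrow> 0"
proof (rule AE_LIMSEQ_zero_if_summable_second_moments)
  have bound: "(\<integral>\<^sup>+ \<omega>. ennreal ((mart (n\<^sup>2) \<omega> / real (n\<^sup>2))\<^sup>2) \<partial>M)
      \<le> ennreal (mart_const * inverse (real n ^ 2))" for n
  proof -
    have "(\<integral>\<^sup>+ \<omega>. ennreal ((mart (n\<^sup>2) \<omega> / real (n\<^sup>2))\<^sup>2) \<partial>M)
        = ennreal ((\<integral>\<omega>. (mart (n\<^sup>2) \<omega>)\<^sup>2 \<partial>M) / (real (n\<^sup>2))\<^sup>2)"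
      using integrable_mart2[of "n\<^sup>2"]
      by (subst nn_integral_eq_integral) (auto simp: power_divide)
    also have "\<dots> \<le> ennreal (mart_const * real (n\<^sup>2) / (real (n\<^sup>2))\<^sup>2)"
      by (intro ennreal_leI divide_right_mono integral_mart2_le) simp
    also have "\<dots> = ennreal (mart_const * inverse (real n ^ 2))"
      by (cases "n = 0") (simp_all add: power2_eq_square field_simps)
    finally show ?thesis .
  qed
  have finite: "(\<Sum>n. ennreal (mart_const * inverse (real n ^ 2))) \<noteq> top"
    using mart_const_nonneg
    by (intro ennreal_suminf_neq_top summable_mult inverse_power_summable) auto
  have "(\<Sum>n. \<integral>\<^sup>+ \<omega>. ennreal ((mart (n\<^sup>2) \<omega> / real (n\<^sup>2))\<^sup>2) \<partial>M)
      \<le> (\<Sum>n. ennreal (mart_const * inverse (real n ^ 2)))"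
    by (intro suminf_le bound summableI)
  then show "(\<Sum>n. \<integral>\<^sup>+ \<omega>. ennreal ((mart (n\<^sup>2) \<omega> / real (n\<^sup>2))\<^sup>2) \<partial>M) < \<infinity>"
    using finite[unfolded less_top] unfolding infinity_ennreal_def by (rule order.strict_trans1)
qed measurable

lemma sum_S_le_mart:
  "AE \<omega> in M. \<forall>n. \<epsilon> * (\<Sum>\<tau><n. S \<tau> \<omega>) \<le> B * real n + L 0 \<omega> + mart n \<omega>"
proof -
  have "AE \<omega> in M. \<forall>\<tau>. cond_drift \<tau> \<omega> \<le> B - \<epsilon> * S \<tau> \<omega>"
    unfolding AE_all_countable cond_drift_def using drift by blast
  then show ?thesis
  proof eventually_elim
    case (elim \<omega>)
    \<comment> \<open>the drift bound telescopes along the path, with the martingale correcting each increment\<close>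
    have path_bound: "\<epsilon> * (\<Sum>\<tau><n. S \<tau> \<omega>) \<le> B * real n - L n \<omega> + L 0 \<omega> + mart n \<omega>" for n
    proof (induction n)
      case (Suc n)
      then show ?case using elim[rule_format, of n] by (simp add: mart_def mart_incr_def algebra_simps)
    qed (simp add: mart_def)
    show ?case
    proof
      fix n show "\<epsilon> * (\<Sum>\<tau><n. S \<tau> \<omega>) \<le> B * real n + L 0 \<omega> + mart n \<omega>"
        using path_bound[of n] L_nonneg[of n \<omega>] by linarith
    qed
  qed
qed

lemma limsup_average_S_le:
  "AE \<omega> in M. limsup (\<lambda>t. ereal ((1 / real t) * (\<Sum>\<tau><t. S \<tau> \<omega>))) \<le> ereal (B / \<epsilon>)"
  using sum_S_le_mart mart_squares_tendsto_zero
proof eventually_elim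
  case (elim \<omega>)
  show ?case
  proof (rule limsup_average_le_if_square_subsequence[where C = "L 0 \<omega> / \<epsilon>"])
    show "(\<Sum>\<tau><n. S \<tau> \<omega>) \<le> B / \<epsilon> * real n + L 0 \<omega> / \<epsilon> + mart n \<omega> / \<epsilon>" for n
      using elim(1) eps_pos by (simp add: field_simps)
    show "(\<lambda>n. mart (n\<^sup>2) \<omega> / \<epsilon> / real (n\<^sup>2)) \<longlonglongrightarrow> 0"
      using tendsto_divide[OF elim(2) tendsto_const, of \<epsilon>] eps_pos by (simp add: field_simps)
  qed (rule S_nonneg)
qed

end

theorem theorem7:
  fixes M :: "'a measure"
    and K :: nat
    and Q :: "nat \<Rightarrow> nat \<Rightarrow> 'a \<Rightarrow> real"
    and p :: "nat \<Rightarrow> 'a \<Rightarrow> real"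
    and w :: "nat \<Rightarrow> real"
    and D \<epsilon> B :: real
  assumes "prob_space M"
    and Q_meas: "\<And>t k. k \<in> {1..K} \<Longrightarrow> Q t k \<in> borel_measurable M"
    and p_meas: "\<And>t. p t \<in> borel_measurable M"
    and w_pos: "\<And>k. k \<in> {1..K} \<Longrightarrow> w k > 0"
    and fourth_moment: "\<And>t k. k \<in> {1..K} \<Longrightarrow>
          AE \<omega> in M. nn_cond_exp M (state_alg M K Q t)
              (\<lambda>\<omega>. ennreal ((Q (Suc t) k \<omega> - Q t k \<omega>) ^ 4)) \<omega> \<le> ennreal D"
    and init: "(\<integral>\<^sup>+ \<omega>. ennreal (lnorm w K (\<lambda>k. Q 0 k \<omega>) ^ 4) \<partial>M) < \<infinity>"
    and eps_pos: "\<epsilon> > 0" and B_pos: "B > 0"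
    and drift: "\<And>t. AE \<omega> in M.
          real_cond_exp M (hist_alg M K Q p t)
              (\<lambda>\<omega>. lyap w K (\<lambda>k. Q (Suc t) k \<omega>) - lyap w K (\<lambda>k. Q t k \<omega>)) \<omega>
            \<le> B - \<epsilon> * (\<Sum>k=1..K. \<bar>Q t k \<omega>\<bar>)"
  shows
    "(\<exists>c > 0. \<exists>a > 0. \<forall>t. AE \<omega> in M.
        lnorm w K (\<lambda>k. Q t k \<omega>) \<ge> a \<longrightarrow>
        real_cond_exp M (state_alg M K Q t) (\<lambda>\<omega>. lnorm w K (\<lambda>k. Q (Suc t) k \<omega>)) \<omega>
          \<le> lnorm w K (\<lambda>k. Q t k \<omega>) - c)
   \<and> (\<exists>b > 0. \<forall>m::nat. m \<ge> 1 \<longrightarrow>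
        (\<Sum>t<m. \<integral>\<^sup>+ \<omega>. ennreal (lnorm w K (\<lambda>k. Q t k \<omega>) ^ 3) \<partial>M) \<le> ennreal (b * real m))
   \<and> (\<forall>k \<in> {1..K}.
        (\<Sum>t. ennreal (1 / (real (Suc t))\<^sup>2) * (\<integral>\<^sup>+ \<omega>. ennreal ((Q (Suc t) k \<omega>)\<^sup>2) \<partial>M)) < \<infinity>)
   \<and> (\<forall>k \<in> {1..K}. AE \<omega> in M. (\<lambda>t. Q t k \<omega> / real t) \<longlonglongrightarrow> 0)
   \<and> (AE \<omega> in M. limsup (\<lambda>t. ereal ((1 / real t) * (\<Sum>\<tau><t. \<Sum>k=1..K. \<bar>Q \<tau> k \<omega>\<bar>)))
          \<le> ereal (B / \<epsilon>))"
proof -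
  interpret drift_system M K Q p w D \<epsilon> B
    by (intro drift_system.intro drift_system_axioms.intro) (use assms in auto)
  have "\<epsilon> / (4 * cN) > 0" "2 * B * cN / \<epsilon> > 0"
    using cN_pos eps_pos B_pos by auto
  then have "\<exists>c > 0. \<exists>a > 0. \<forall>t. AE \<omega> in M. N t \<omega> \<ge> a \<longrightarrow>
      real_cond_exp M (F t) (N (Suc t)) \<omega> \<le> N t \<omega> - c"
    using cond_exp_N_Suc_drift by blast
  then show ?thesis
    using average_cube_moment_bounded second_moments_div_time_summable Q_div_time_tendsto_zero
      limsup_average_S_le
    by blast
qed

end
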